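(* Let $k\le n$ be positive integers, $x^*\in\mathbb{R}^n$ with support $S^*$, $|S^*|\le k$, $\mathcal{X}^0\in\mathbb{R}^n$ and $\eta>0$. Consider the oracle sequence $(S^t,u^t,\mathcal{X}^t)_{t\ge0}$ and the counts $c^t_i$ defined below. For all $i\in S^*$ and all integers $t\ge1$: if $c^t_i>\frac{2\|\mathcal{X}^0\|_\infty}{\eta|x^*_i|}$, then $i\in S^{t'}$ for all $t'\ge t$.
   Context: $S^*=\{i:x^*_i\neq0\}$. For $v\in\mathbb{R}^n$, $\mathrm{largest}_k(v)$ is the set of indices of the $k$ entries of $v$ with largest absolute value (ties broken by selecting the highest indices). The oracle sequence is defined for all $t\ge0$ by $S^t=\mathrm{largest}_k(\mathcal{X}^t)$, $u^t_i=-\eta x^*_i$ if $i\in S^*\setminus S^t$ and $u^t_i=0$ otherwise, and $\mathcal{X}^{t+1}=\mathcal{X}^t-u^t$. For $i\in\{1,\dots,n\}$, $c^0_i=0$ and, for $t\ge1$, $c^t_i=|\{t'\in\{0,\dots,t-1\}: i\in S^*\setminus S^{t'}\}|$. *)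

theory Defs
  imports Complex_Main
begin

text \<open>Vectors in R^n are modelled as functions nat \<Rightarrow> real, with coordinates indexed by {1..n}.\<close>

definition supp :: "nat \<Rightarrow> (nat \<Rightarrow> real) \<Rightarrow> nat set" where
  "supp n x = {i \<in> {1..n}. x i \<noteq> 0}"

definition linf_norm :: "nat \<Rightarrow> (nat \<Rightarrow> real) \<Rightarrow> real" where
  "linf_norm n x = Max ((\<lambda>i. \<bar>x i\<bar>) ` {1..n})"

definition beats :: "(nat \<Rightarrow> real) \<Rightarrow> nat \<Rightarrow> nat \<Rightarrow> bool" where
  "beats v j i \<longleftrightarrow> \<bar>v j\<bar> > \<bar>v i\<bar> \<or> (\<bar>v j\<bar> = \<bar>v i\<bar> \<and> j > i)"

text \<open>largest_k: indices of the k entries with largest absolute value, ties broken by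
  selecting the highest indices; i.e. those i with fewer than k indices beating them.\<close>
definition largest :: "nat \<Rightarrow> nat \<Rightarrow> (nat \<Rightarrow> real) \<Rightarrow> nat set" where
  "largest n k v = {i \<in> {1..n}. card {j \<in> {1..n}. beats v j i} < k}"

fun oracle_X :: "nat \<Rightarrow> nat \<Rightarrow> (nat \<Rightarrow> real) \<Rightarrow> (nat \<Rightarrow> real) \<Rightarrow> real \<Rightarrow> nat \<Rightarrow> (nat \<Rightarrow> real)" where
  "oracle_X n k xs X0 eta 0 = X0"
| "oracle_X n k xs X0 eta (Suc t) =
     (let X = oracle_X n k xs X0 eta t;
          S = largest n k X;
          u = (\<lambda>i. if i \<in> supp n xs - S then - eta * xs i else 0)
      in (\<lambda>i. X i - u i))"

definition oracle_S :: "nat \<Rightarrow> nat \<Rightarrow> (nat \<Rightarrow> real) \<Rightarrow> (nat \<Rightarrow> real) \<Rightarrow> real \<Rightarrow> nat \<Rightarrow> nat set" where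
  "oracle_S n k xs X0 eta t = largest n k (oracle_X n k xs X0 eta t)"

definition oracle_c :: "nat \<Rightarrow> nat \<Rightarrow> (nat \<Rightarrow> real) \<Rightarrow> (nat \<Rightarrow> real) \<Rightarrow> real \<Rightarrow> nat \<Rightarrow> nat \<Rightarrow> nat" where
  "oracle_c n k xs X0 eta t i = card {t'. t' < t \<and> i \<in> supp n xs - oracle_S n k xs X0 eta t'}"

end

theory Submission
  imports Defs
begin

text \<open>A coordinate outside the support of \<open>xs\<close> is never updated, so it stays bounded by
  \<open>\<parallel>X\<^sup>0\<parallel>\<^sub>\<infinity>\<close>. A coordinate \<open>i\<close> in the support is moved by \<open>\<eta> xs i\<close>, always in the same
  direction, exactly at the \<open>c\<^sub>i\<close> steps where it is missed, so
  \<open>|X\<^sub>i| \<ge> c\<^sub>i \<eta> |xs i| - \<parallel>X\<^sup>0\<parallel>\<^sub>\<infinity> > \<parallel>X\<^sup>0\<parallel>\<^sub>\<infinity>\<close> once \<open>c\<^sub>i\<close> exceeds the threshold. Then only the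
  other at most \<open>k - 1\<close> support coordinates can beat \<open>i\<close>, so \<open>i\<close> is selected; as \<open>c\<^sub>i\<close> never
  decreases, this persists.\<close>

lemma abs_le_linf_norm:
  assumes "j \<in> {1..n}"
  shows "\<bar>x j\<bar> \<le> linf_norm n x"
  unfolding linf_norm_def using assms by (intro Max_ge) auto

lemma largest_if_dominates_outside:
  assumes "finite A" "card A \<le> k" "i \<in> A" "i \<in> {1..n}"
    and dominates: "\<And>j. j \<in> {1..n} - A \<Longrightarrow> \<bar>v j\<bar> < \<bar>v i\<bar>"
  shows "i \<in> largest n k v"
proof -
  have "{j \<in> {1..n}. beats v j i} \<subseteq> A - {i}"
    using dominates by (force simp: beats_def)
  then have "card {j \<in> {1..n}. beats v j i} \<le> card (A - {i})"
    using \<open>finite A\<close> by (intro card_mono) auto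
  also have "\<dots> < k"
    using assms(1-3) card_gt_0_iff[of A] by auto
  finally show ?thesis
    unfolding largest_def using \<open>i \<in> {1..n}\<close> by simp
qed

lemma oracle_c_Suc:
  "oracle_c n k xs X0 eta (Suc t) i = oracle_c n k xs X0 eta t i +
     (if i \<in> supp n xs - oracle_S n k xs X0 eta t then 1 else 0)"
proof -
  let ?missed = "\<lambda>t'. i \<in> supp n xs - oracle_S n k xs X0 eta t'"
  have "{t'. t' < Suc t \<and> ?missed t'} =
      (if ?missed t then insert t {t'. t' < t \<and> ?missed t'} else {t'. t' < t \<and> ?missed t'})"
    by (auto simp: less_Suc_eq)
  then show ?thesis
    unfolding oracle_c_def by simp
qed

lemma oracle_c_mono:
  assumes "t \<le> t'"
  shows "oracle_c n k xs X0 eta t i \<le> oracle_c n k xs X0 eta t' i"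
  unfolding oracle_c_def using assms by (intro card_mono) auto

lemma oracle_X_eq:
  "oracle_X n k xs X0 eta t i =
     (if i \<in> supp n xs then X0 i + eta * real (oracle_c n k xs X0 eta t i) * xs i else X0 i)"
proof (induction t)
  case 0
  then show ?case by (simp add: oracle_c_def)
next
  case (Suc t)
  then show ?case by (simp add: oracle_c_Suc oracle_S_def Let_def algebra_simps)
qed

lemma oracle_X_large_on_supp:
  assumes "eta > 0" "i \<in> supp n xs"
    and "real (oracle_c n k xs X0 eta t i) > 2 * linf_norm n X0 / (eta * \<bar>xs i\<bar>)"
  shows "\<bar>oracle_X n k xs X0 eta t i\<bar> > linf_norm n X0"
proof -
  let ?c = "real (oracle_c n k xs X0 eta t i)"
  have "i \<in> {1..n}" "xs i \<noteq> 0"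
    using assms(2) by (auto simp: supp_def)
  then have "\<bar>eta * ?c * xs i\<bar> > 2 * linf_norm n X0"
    using assms(1,3) by (simp add: abs_mult field_simps)
  moreover have "\<bar>X0 i\<bar> \<le> linf_norm n X0"
    using \<open>i \<in> {1..n}\<close> by (rule abs_le_linf_norm)
  ultimately show ?thesis
    using assms(2) by (simp add: oracle_X_eq)
qed

theorem lemmaC2:
  fixes n k :: nat and xs X0 :: "nat \<Rightarrow> real" and eta :: real
  assumes "0 < k" and "k \<le> n"
    and "card (supp n xs) \<le> k"
    and "eta > 0"
  shows "\<forall>i \<in> supp n xs. \<forall>t \<ge> 1.
           real (oracle_c n k xs X0 eta t i) > 2 * linf_norm n X0 / (eta * \<bar>xs i\<bar>)
           \<longrightarrow> (\<forall>t' \<ge> t. i \<in> oracle_S n k xs X0 eta t')"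
proof (intro ballI allI impI)
  fix i t t'
  assume i: "i \<in> supp n xs"
    and c: "real (oracle_c n k xs X0 eta t i) > 2 * linf_norm n X0 / (eta * \<bar>xs i\<bar>)"
    and "t \<le> t'"
  let ?X = "oracle_X n k xs X0 eta t'"
  have "real (oracle_c n k xs X0 eta t' i) > 2 * linf_norm n X0 / (eta * \<bar>xs i\<bar>)"
    using c oracle_c_mono[OF \<open>t \<le> t'\<close>, of n k xs X0 eta i] by linarith
  then have large: "\<bar>?X i\<bar> > linf_norm n X0"
    by (rule oracle_X_large_on_supp[OF assms(4) i])
  have "\<bar>?X j\<bar> < \<bar>?X i\<bar>" if "j \<in> {1..n} - supp n xs" for j
    using that large abs_le_linf_norm[of j n X0] by (simp add: oracle_X_eq)
  then show "i \<in> oracle_S n k xs X0 eta t'"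
    unfolding oracle_S_def
    using assms(3) i by (intro largest_if_dominates_outside) (auto simp: supp_def)
qed

end
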